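(* Let $p:\mathcal{T}_n\to[0,1]$ be any probability distribution on $\mathcal{T}_n$ that is invariant under relabelings of the leaves, and let $E$ denote expected value with respect to $p$ (for $D_n^2$, the two trees being chosen independently according to $p$). Then $$E(D_n^2)=2E(\overline\Phi^{(2)}_n)-2\cdot\frac{E(S_n)^2}{n}-4\cdot\frac{E(\Phi_n)^2}{n(n-1)}.$$
   Context: A phylogenetic tree with $n$ leaves is a fully resolved (binary) rooted tree with leaves bijectively labeled by $\{1,\dots,n\}$; $\mathcal{T}_n$ is the set of such trees. $\delta_T(i)$ is the depth (number of arcs from the root) of leaf $i$; for $i\ne j$, $\varphi_T(i,j)$ is the depth of the lowest common ancestor of leaves $i,j$; $\varphi_T(i,i)=\delta_T(i)$. $d_{\varphi,2}(T_1,T_2)=\sqrt{\sum_{1\le i\le j\le n}(\varphi_{T_1}(i,j)-\varphi_{T_2}(i,j))^2}$, and $D_n^2$ is the random variable $d_{\varphi,2}(T,T')^2$ for a random pair $(T,T')$. $S_n$, $\Phi_n$, $\overline\Phi^{(2)}_n$ are the random variables on $\mathcal{T}_n$ giving respectively the Sackin index $S(T)=\sum_{i=1}^n\delta_T(i)$, the total cophenetic index $\Phi(T)=\sum_{1\le i<j\le n}\varphi_T(i,j)$, and $\overline\Phi^{(2)}(T)=\sum_{1\le i\le j\le n}\varphi_T(i,j)^2$. *)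

theory Defs
  imports Complex_Main
begin

text \<open>Rooted binary trees with leaf labels. Unordered (non-planar) trees are
represented by a canonical ordered representative: at every internal node the
left subtree contains the smallest leaf label.\<close>

datatype 'a ptree = PLeaf 'a | PNode "'a ptree" "'a ptree"

fun leaf_list :: "'a ptree \<Rightarrow> 'a list" where
  "leaf_list (PLeaf a) = [a]"
| "leaf_list (PNode l r) = leaf_list l @ leaf_list r"

fun is_canon :: "nat ptree \<Rightarrow> bool" where
  "is_canon (PLeaf a) = True"
| "is_canon (PNode l r) = (is_canon l \<and> is_canon r \<and>
      Min (set (leaf_list l)) < Min (set (leaf_list r)))"

fun canon :: "nat ptree \<Rightarrow> nat ptree" where
  "canon (PLeaf a) = PLeaf a"
| "canon (PNode l r) =
     (if Min (set (leaf_list l)) < Min (set (leaf_list r))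
      then PNode (canon l) (canon r) else PNode (canon r) (canon l))"

definition phylo_trees :: "nat \<Rightarrow> nat ptree set" where
  "phylo_trees n = {T. distinct (leaf_list T) \<and> set (leaf_list T) = {1..n} \<and> is_canon T}"

definition relabel :: "(nat \<Rightarrow> nat) \<Rightarrow> nat ptree \<Rightarrow> nat ptree" where
  "relabel \<sigma> T = canon (map_ptree \<sigma> T)"

fun depth :: "nat ptree \<Rightarrow> nat \<Rightarrow> nat" where
  "depth (PLeaf a) i = 0"
| "depth (PNode l r) i =
     (if i \<in> set (leaf_list l) then 1 + depth l i
      else if i \<in> set (leaf_list r) then 1 + depth r i else 0)"

fun lca_depth :: "nat ptree \<Rightarrow> nat \<Rightarrow> nat \<Rightarrow> nat" where
  "lca_depth (PLeaf a) i j = 0"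
| "lca_depth (PNode l r) i j =
     (if i \<in> set (leaf_list l) \<and> j \<in> set (leaf_list l) then 1 + lca_depth l i j
      else if i \<in> set (leaf_list r) \<and> j \<in> set (leaf_list r) then 1 + lca_depth r i j
      else 0)"

definition phi :: "nat ptree \<Rightarrow> nat \<Rightarrow> nat \<Rightarrow> nat" where
  "phi T i j = (if i = j then depth T i else lca_depth T i j)"

definition sackin :: "nat \<Rightarrow> nat ptree \<Rightarrow> nat" where
  "sackin n T = (\<Sum>i\<in>{1..n}. depth T i)"

definition total_cophenetic :: "nat \<Rightarrow> nat ptree \<Rightarrow> nat" where
  "total_cophenetic n T = (\<Sum>(i,j)\<in>{(i,j). 1 \<le> i \<and> i < j \<and> j \<le> n}. phi T i j)"

definition phibar2 :: "nat \<Rightarrow> nat ptree \<Rightarrow> nat" where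
  "phibar2 n T = (\<Sum>(i,j)\<in>{(i,j). 1 \<le> i \<and> i \<le> j \<and> j \<le> n}. (phi T i j)^2)"

definition dphi2_sq :: "nat \<Rightarrow> nat ptree \<Rightarrow> nat ptree \<Rightarrow> real" where
  "dphi2_sq n T1 T2 = (\<Sum>(i,j)\<in>{(i,j). 1 \<le> i \<and> i \<le> j \<and> j \<le> n}.
       (real (phi T1 i j) - real (phi T2 i j))^2)"

definition expect :: "nat \<Rightarrow> (nat ptree \<Rightarrow> real) \<Rightarrow> (nat ptree \<Rightarrow> real) \<Rightarrow> real" where
  "expect n p f = (\<Sum>T\<in>phylo_trees n. p T * f T)"

definition is_distribution :: "nat \<Rightarrow> (nat ptree \<Rightarrow> real) \<Rightarrow> bool" where
  "is_distribution n p \<longleftrightarrow> (\<forall>T\<in>phylo_trees n. 0 \<le> p T \<and> p T \<le> 1) \<and>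
      (\<Sum>T\<in>phylo_trees n. p T) = 1"

definition relabel_invariant :: "nat \<Rightarrow> (nat ptree \<Rightarrow> real) \<Rightarrow> bool" where
  "relabel_invariant n p \<longleftrightarrow>
     (\<forall>\<sigma> T. bij_betw \<sigma> {1..n} {1..n} \<and> T \<in> phylo_trees n \<longrightarrow> p (relabel \<sigma> T) = p T)"

end

theory Submission
  imports Defs "HOL-Combinatorics.Transposition"
begin

text \<open>Expanding the square and using independence of the two trees, \<open>E(D_n^2)\<close> is the sum
over all pairs \<open>i \<le> j\<close> of \<open>2 E(\<phi>_{ij}^2) - 2 E(\<phi>_{ij})^2\<close>. Relabelling invariance of \<open>p\<close>
makes \<open>E(\<phi>_{ij})\<close> invariant under every permutation of the leaves, and permutations act
transitively on leaves and on pairs of distinct leaves. So the \<open>n\<close> diagonal expectations all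
equal \<open>E(S_n)/n\<close> and the \<open>n(n-1)/2\<close> off-diagonal ones all equal \<open>2 E(\<Phi>_n)/(n(n-1))\<close>,
and the sum of their squares is read off.\<close>

lemma leaf_list_map_ptree: "leaf_list (map_ptree f t) = map f (leaf_list t)"
  by (induction t) auto

lemma set_ptree_leaf_list: "set_ptree t = set (leaf_list t)"
  by (induction t) auto

lemma leaf_list_nonempty: "leaf_list t \<noteq> []"
  by (induction t) auto

lemma set_leaf_list_canon [simp]: "set (leaf_list (canon t)) = set (leaf_list t)"
  by (induction t) auto

lemma distinct_leaf_list_canon [simp]: "distinct (leaf_list (canon t)) = distinct (leaf_list t)"
  by (induction t) auto

lemma Min_leaves_neq:
  assumes "set (leaf_list l) \<inter> set (leaf_list r) = {}"
  shows "Min (set (leaf_list l)) \<noteq> Min (set (leaf_list r))"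
  using assms Min_in[of "set (leaf_list l)"] Min_in[of "set (leaf_list r)"] leaf_list_nonempty
  by (metis disjoint_iff finite_set set_empty)

lemma canon_PNode_commute:
  assumes "set (leaf_list l) \<inter> set (leaf_list r) = {}"
  shows "canon (PNode l r) = canon (PNode r l)"
  using Min_leaves_neq[OF assms] by (auto simp: linorder_neq_iff)

lemma is_canon_canon: "distinct (leaf_list t) \<Longrightarrow> is_canon (canon t)"
proof (induction t)
  case (PNode l r)
  have "Min (set (leaf_list l)) \<noteq> Min (set (leaf_list r))"
    using PNode.prems by (intro Min_leaves_neq) auto
  then consider "Min (set (leaf_list l)) < Min (set (leaf_list r))"
    | "Min (set (leaf_list r)) < Min (set (leaf_list l))"
    by linarith
  then show ?case
    using PNode by cases auto
qed simp

lemma canon_is_canon: "is_canon t \<Longrightarrow> canon t = t"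
  by (induction t) auto

lemma canon_map_ptree_canon:
  "distinct (leaf_list (map_ptree f t)) \<Longrightarrow> canon (map_ptree f (canon t)) = canon (map_ptree f t)"
proof (induction t)
  case (PNode l r)
  have disjoint: "set (leaf_list (map_ptree f (canon l))) \<inter> set (leaf_list (map_ptree f (canon r))) = {}"
    using PNode.prems by (auto simp: leaf_list_map_ptree)
  have "canon (map_ptree f (canon (PNode l r))) = canon (PNode (map_ptree f (canon l)) (map_ptree f (canon r)))"
    using canon_PNode_commute[OF disjoint] by auto
  also have "\<dots> = canon (map_ptree f (PNode l r))"
    using PNode by (simp add: leaf_list_map_ptree)
  finally show ?case .
qed simp

lemma depth_canon: "distinct (leaf_list t) \<Longrightarrow> depth (canon t) i = depth t i"
  by (induction t) auto

lemma lca_depth_canon: "distinct (leaf_list t) \<Longrightarrow> lca_depth (canon t) i j = lca_depth t i j"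
  by (induction t) auto

lemma phi_canon: "distinct (leaf_list t) \<Longrightarrow> phi (canon t) i j = phi t i j"
  by (simp add: phi_def depth_canon lca_depth_canon)

lemma depth_map_ptree:
  "inj_on f A \<Longrightarrow> set (leaf_list t) \<subseteq> A \<Longrightarrow> i \<in> A \<Longrightarrow> depth (map_ptree f t) (f i) = depth t i"
  by (induction t) (auto simp: leaf_list_map_ptree inj_on_image_mem_iff)

lemma lca_depth_map_ptree:
  "inj_on f A \<Longrightarrow> set (leaf_list t) \<subseteq> A \<Longrightarrow> i \<in> A \<Longrightarrow> j \<in> A \<Longrightarrow>
     lca_depth (map_ptree f t) (f i) (f j) = lca_depth t i j"
  by (induction t) (auto simp: leaf_list_map_ptree inj_on_image_mem_iff)

lemma phi_map_ptree:
  "inj_on f A \<Longrightarrow> set (leaf_list t) \<subseteq> A \<Longrightarrow> i \<in> A \<Longrightarrow> j \<in> A \<Longrightarrow>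
     phi (map_ptree f t) (f i) (f j) = phi t i j"
  by (auto simp: phi_def depth_map_ptree lca_depth_map_ptree dest: inj_onD)

lemma relabel_in_phylo_trees:
  assumes "bij_betw \<sigma> {1..n} {1..n}" and "T \<in> phylo_trees n"
  shows "relabel \<sigma> T \<in> phylo_trees n"
  using assms
  by (auto simp: relabel_def phylo_trees_def leaf_list_map_ptree distinct_map bij_betw_def
      intro: is_canon_canon)

lemma relabel_relabel_inverse:
  assumes "\<And>x. x \<in> {1..n} \<Longrightarrow> \<tau> (\<sigma> x) = x" and "T \<in> phylo_trees n"
  shows "relabel \<tau> (relabel \<sigma> T) = T"
proof -
  have leaves: "set (leaf_list T) = {1..n}" "distinct (leaf_list T)" "is_canon T"
    using assms(2) by (auto simp: phylo_trees_def)
  have "map_ptree (\<tau> \<circ> \<sigma>) T = map_ptree id T"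
    using assms(1) leaves(1) by (intro ptree.map_cong0) (auto simp: set_ptree_leaf_list)
  then have "map_ptree \<tau> (map_ptree \<sigma> T) = T"
    by (simp add: ptree.map_comp ptree.map_id)
  then show ?thesis
    using leaves unfolding relabel_def
    by (simp add: canon_map_ptree_canon canon_is_canon)
qed

lemma bij_betw_relabel:
  assumes "bij_betw \<sigma> {1..n} {1..n}"
  shows "bij_betw (relabel \<sigma>) (phylo_trees n) (phylo_trees n)"
proof (rule bij_betw_byWitness)
  let ?\<tau> = "inv_into {1..n} \<sigma>"
  have "bij_betw ?\<tau> {1..n} {1..n}"
    using assms by (rule bij_betw_inv_into)
  then show "relabel \<sigma> ` phylo_trees n \<subseteq> phylo_trees n" "relabel ?\<tau> ` phylo_trees n \<subseteq> phylo_trees n"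
    using assms by (auto intro: relabel_in_phylo_trees)
  show "\<forall>T\<in>phylo_trees n. relabel ?\<tau> (relabel \<sigma> T) = T" "\<forall>T\<in>phylo_trees n. relabel \<sigma> (relabel ?\<tau> T) = T"
    using relabel_relabel_inverse[of n ?\<tau> \<sigma>, OF bij_betw_inv_into_left[OF assms]]
      relabel_relabel_inverse[of n \<sigma> ?\<tau>, OF bij_betw_inv_into_right[OF assms]] by blast+
qed

lemma phi_relabel:
  assumes "bij_betw \<sigma> {1..n} {1..n}" and "T \<in> phylo_trees n" and "i \<in> {1..n}" and "j \<in> {1..n}"
  shows "phi (relabel \<sigma> T) (\<sigma> i) (\<sigma> j) = phi T i j"
  using assms
  by (auto simp: relabel_def phylo_trees_def phi_canon phi_map_ptree leaf_list_map_ptree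
      distinct_map bij_betw_def)

lemma sum_weighted_pairwise_square_diff:
  fixes p x :: "'a \<Rightarrow> real"
  shows "(\<Sum>a\<in>A. \<Sum>b\<in>A. p a * p b * (x a - x b)^2)
       = 2 * (\<Sum>a\<in>A. p a) * (\<Sum>a\<in>A. p a * (x a)^2) - 2 * (\<Sum>a\<in>A. p a * x a)^2"
proof -
  have "(\<Sum>a\<in>A. \<Sum>b\<in>A. p a * p b * (x a - x b)^2)
      = (\<Sum>a\<in>A. \<Sum>b\<in>A. p b * (p a * (x a)^2)) + (\<Sum>a\<in>A. \<Sum>b\<in>A. p a * (p b * (x b)^2))
        - 2 * (\<Sum>a\<in>A. \<Sum>b\<in>A. (p a * x a) * (p b * x b))"
    by (simp add: power2_diff algebra_simps sum.distrib sum_subtractf sum_distrib_left)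
  also have "\<dots> = 2 * (\<Sum>a\<in>A. p a) * (\<Sum>a\<in>A. p a * (x a)^2) - 2 * (\<Sum>a\<in>A. p a * x a)^2"
    by (simp add: sum_distrib_left[symmetric] sum_distrib_right[symmetric] power2_eq_square
        sum.swap[of _ A A])
  finally show ?thesis .
qed

lemma sum_squares_const_eq_square_sum_div_card:
  fixes f :: "'a \<Rightarrow> real"
  assumes "\<And>x y. x \<in> A \<Longrightarrow> y \<in> A \<Longrightarrow> f x = f y"
  shows "(\<Sum>x\<in>A. (f x)^2) = (\<Sum>x\<in>A. f x)^2 / card A"
proof (cases "A = {}")
  case False
  then obtain a where "a \<in> A" by blast
  then have "\<And>x. x \<in> A \<Longrightarrow> f x = f a"
    using assms by blast
  then have "(\<Sum>x\<in>A. (f x)^2) = card A * (f a)^2" "(\<Sum>x\<in>A. f x) = card A * f a"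
    by simp_all
  then show ?thesis
    by (cases "card A = 0") (simp_all add: power2_eq_square)
qed simp

lemma sum_upper_triangle_split:
  fixes n :: nat
  shows "(\<Sum>(i, j)\<in>{(i, j). 1 \<le> i \<and> i \<le> j \<and> j \<le> n}. g i j)
     = (\<Sum>i = 1..n. g i i) + (\<Sum>(i, j)\<in>{(i, j). 1 \<le> i \<and> i < j \<and> j \<le> n}. g i j)"
proof -
  have split: "{(i, j). 1 \<le> i \<and> i \<le> j \<and> j \<le> n}
      = (\<lambda>i. (i, i)) ` {1..n} \<union> {(i, j). 1 \<le> i \<and> i < j \<and> j \<le> n}"
    by auto
  have "finite {(i, j). 1 \<le> i \<and> i < j \<and> j \<le> n}"
    by (rule finite_subset[of _ "{1..n} \<times> {1..n}"]) auto
  then show ?thesis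
    unfolding split by (subst sum.union_disjoint) (auto simp: sum.reindex inj_on_def)
qed

lemma card_strict_upper_triangle:
  fixes n :: nat
  shows "2 * card {(i, j). 1 \<le> i \<and> i < j \<and> j \<le> n} = n * (n - 1)"
proof (induction n)
  case 0
  have empty: "{(i, j). 1 \<le> i \<and> i < j \<and> j \<le> (0::nat)} = {}"
    by auto
  show ?case
    unfolding empty by simp
next
  case (Suc n)
  have split: "{(i, j). 1 \<le> i \<and> i < j \<and> j \<le> Suc n}
      = {(i, j). 1 \<le> i \<and> i < j \<and> j \<le> n} \<union> (\<lambda>i. (i, Suc n)) ` {1..n}"
    by auto
  have "finite {(i, j). 1 \<le> i \<and> i < j \<and> j \<le> n}"
    by (rule finite_subset[of _ "{1..n} \<times> {1..n}"]) auto
  then have "card {(i, j). 1 \<le> i \<and> i < j \<and> j \<le> Suc n}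
      = card {(i, j). 1 \<le> i \<and> i < j \<and> j \<le> n} + n"
    unfolding split by (subst card_Un_disjoint) (auto simp: card_image inj_on_def)
  then show ?case
    using Suc by (cases n) (auto simp: algebra_simps)
qed

lemma real_card_strict_upper_triangle:
  "real (card {(i, j). 1 \<le> i \<and> i < j \<and> j \<le> n}) = real n * (real n - 1) / 2"
proof -
  have "real (2 * card {(i, j). 1 \<le> i \<and> i < j \<and> j \<le> n}) = real (n * (n - 1))"
    by (simp only: card_strict_upper_triangle)
  then show ?thesis
    by (cases n) (simp_all add: algebra_simps)
qed

definition expected_phi :: "nat \<Rightarrow> (nat ptree \<Rightarrow> real) \<Rightarrow> nat \<Rightarrow> nat \<Rightarrow> real" where
  "expected_phi n p i j = expect n p (\<lambda>T. real (phi T i j))"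

lemma expect_relabel:
  assumes "relabel_invariant n p" and "bij_betw \<sigma> {1..n} {1..n}"
  shows "expect n p (\<lambda>T. f (relabel \<sigma> T)) = expect n p f"
proof -
  have "expect n p (\<lambda>T. f (relabel \<sigma> T)) = (\<Sum>T\<in>phylo_trees n. p (relabel \<sigma> T) * f (relabel \<sigma> T))"
    using assms unfolding expect_def relabel_invariant_def by (intro sum.cong) auto
  also have "\<dots> = expect n p f"
    unfolding expect_def by (rule sum.reindex_bij_betw[OF bij_betw_relabel[OF assms(2)]])
  finally show ?thesis .
qed

lemma expected_phi_permute:
  assumes "relabel_invariant n p" and "bij_betw \<sigma> {1..n} {1..n}"
    and "i \<in> {1..n}" and "j \<in> {1..n}"
  shows "expected_phi n p (\<sigma> i) (\<sigma> j) = expected_phi n p i j"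
proof -
  have "expected_phi n p i j = expect n p (\<lambda>T. real (phi (relabel \<sigma> T) (\<sigma> i) (\<sigma> j)))"
    unfolding expected_phi_def expect_def using phi_relabel[OF assms(2) _ assms(3,4)] by simp
  also have "\<dots> = expected_phi n p (\<sigma> i) (\<sigma> j)"
    unfolding expected_phi_def by (rule expect_relabel[OF assms(1,2)])
  finally show ?thesis by simp
qed

lemma exists_permutation_map_pair:
  assumes "i \<in> A" "j \<in> A" "k \<in> A" "l \<in> A" "i \<noteq> j" "k \<noteq> l"
  shows "\<exists>\<sigma>. bij_betw \<sigma> A A \<and> \<sigma> i = k \<and> \<sigma> j = l"
proof -
  define j' where "j' = transpose i k j"
  have "j' \<in> A" "j' \<noteq> k"
    using assms by (auto simp: j'_def transpose_def)
  then have "bij_betw (transpose j' l \<circ> transpose i k) A A"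
    using assms by (intro bij_betw_trans[of _ A A]) auto
  moreover have "(transpose j' l \<circ> transpose i k) i = k" "(transpose j' l \<circ> transpose i k) j = l"
    using \<open>j' \<noteq> k\<close> assms by (simp_all add: j'_def)
  ultimately show ?thesis by blast
qed

lemma expected_phi_diagonal_eq:
  assumes "relabel_invariant n p" and "i \<in> {1..n}" and "k \<in> {1..n}"
  shows "expected_phi n p i i = expected_phi n p k k"
  using expected_phi_permute[OF assms(1) _ assms(2,2), of "transpose i k"] assms by simp

lemma expected_phi_off_diagonal_eq:
  assumes "relabel_invariant n p" and "i \<in> {1..n}" "j \<in> {1..n}" "k \<in> {1..n}" "l \<in> {1..n}"
    and "i \<noteq> j" and "k \<noteq> l"
  shows "expected_phi n p i j = expected_phi n p k l"
  using exists_permutation_map_pair[OF assms(2-7)] expected_phi_permute[OF assms(1) _ assms(2,3)]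
  by metis

lemma expect_sackin: "expect n p (\<lambda>T. real (sackin n T)) = (\<Sum>i = 1..n. expected_phi n p i i)"
  unfolding expect_def sackin_def expected_phi_def phi_def
  by (simp add: sum_distrib_left sum.swap[of _ "phylo_trees n"])

lemma expect_total_cophenetic:
  "expect n p (\<lambda>T. real (total_cophenetic n T))
     = (\<Sum>(i, j)\<in>{(i, j). 1 \<le> i \<and> i < j \<and> j \<le> n}. expected_phi n p i j)"
  unfolding expect_def total_cophenetic_def expected_phi_def
  by (simp add: split_def sum_distrib_left sum.swap[of _ "phylo_trees n"])

lemma expect_dphi2_sq:
  assumes "is_distribution n p"
  shows "(\<Sum>T1\<in>phylo_trees n. \<Sum>T2\<in>phylo_trees n. p T1 * p T2 * dphi2_sq n T1 T2)
       = 2 * expect n p (\<lambda>T. real (phibar2 n T))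
         - 2 * (\<Sum>(i, j)\<in>{(i, j). 1 \<le> i \<and> i \<le> j \<and> j \<le> n}. (expected_phi n p i j)^2)"
proof -
  let ?P = "phylo_trees n" and ?I = "{(i, j). 1 \<le> i \<and> i \<le> j \<and> j \<le> n}"
  have total: "(\<Sum>T\<in>?P. p T) = 1"
    using assms by (simp add: is_distribution_def)
  have "(\<Sum>T1\<in>?P. \<Sum>T2\<in>?P. p T1 * p T2 * dphi2_sq n T1 T2)
      = (\<Sum>q\<in>?I. \<Sum>T1\<in>?P. \<Sum>T2\<in>?P.
           p T1 * p T2 * (case q of (i, j) \<Rightarrow> (real (phi T1 i j) - real (phi T2 i j))^2))"
    unfolding dphi2_sq_def sum_distrib_left by (subst sum.swap, subst sum.swap, rule refl)
  also have "\<dots> = (\<Sum>(i, j)\<in>?I. 2 * expect n p (\<lambda>T. real (phi T i j)^2) - 2 * (expected_phi n p i j)^2)"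
    unfolding expect_def expected_phi_def
    by (simp add: split_def sum_weighted_pairwise_square_diff total)
  also have "\<dots> = 2 * expect n p (\<lambda>T. real (phibar2 n T))
         - 2 * (\<Sum>(i, j)\<in>?I. (expected_phi n p i j)^2)"
    unfolding expect_def phibar2_def
    by (simp add: split_def sum_subtractf sum_distrib_left) (rule sum.swap)
  finally show ?thesis .
qed

theorem proposition4:
  fixes n :: nat and p :: "nat ptree \<Rightarrow> real"
  assumes "is_distribution n p"
    and "relabel_invariant n p"
  shows "(\<Sum>T1\<in>phylo_trees n. \<Sum>T2\<in>phylo_trees n. p T1 * p T2 * dphi2_sq n T1 T2)
       = 2 * expect n p (\<lambda>T. real (phibar2 n T))
         - 2 * (expect n p (\<lambda>T. real (sackin n T)))^2 / real n
         - 4 * (expect n p (\<lambda>T. real (total_cophenetic n T)))^2 / (real n * (real n - 1))"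
proof -
  let ?e = "expected_phi n p" and ?U = "{(i, j). 1 \<le> i \<and> i < j \<and> j \<le> n}"
  have "(\<Sum>i = 1..n. (?e i i)^2) = (\<Sum>i = 1..n. ?e i i)^2 / card {1..n}"
    by (rule sum_squares_const_eq_square_sum_div_card)
      (auto intro: expected_phi_diagonal_eq[OF assms(2)])
  then have diagonal: "(\<Sum>i = 1..n. (?e i i)^2) = (expect n p (\<lambda>T. real (sackin n T)))^2 / real n"
    by (simp add: expect_sackin)
  have "(\<Sum>(i, j)\<in>?U. (?e i j)^2) = (\<Sum>q\<in>?U. (case_prod ?e q)^2)"
    by (simp add: split_def)
  also have "\<dots> = (\<Sum>q\<in>?U. case_prod ?e q)^2 / card ?U"
    by (rule sum_squares_const_eq_square_sum_div_card)
      (auto intro!: expected_phi_off_diagonal_eq[OF assms(2)])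
  also have "\<dots> = (expect n p (\<lambda>T. real (total_cophenetic n T)))^2 / (real n * (real n - 1) / 2)"
    by (simp only: expect_total_cophenetic real_card_strict_upper_triangle)
  finally have off_diagonal: "(\<Sum>(i, j)\<in>?U. (?e i j)^2)
      = 2 * (expect n p (\<lambda>T. real (total_cophenetic n T)))^2 / (real n * (real n - 1))"
    by simp
  show ?thesis
    unfolding expect_dphi2_sq[OF assms(1)] sum_upper_triangle_split diagonal off_diagonal
    by (simp add: right_diff_distrib distrib_left)
qed

end
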